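(* Let $\rho$ be a state of $A$, $\sigma$ a state of $B$, $\eta$ a state of $R$, $d=d_R$, and $\Lambda_p(\eta):=p\eta+(1-p)\mathbb{1}/d$. For every $p\in(0,1]$: $\Delta H_\eta\ge0$ if and only if $\Delta H_{\Lambda_p(\eta)}\ge0$.
   Context: $G$ is a compact group with normalized Haar measure $dg$; finite-dimensional systems $A,B$ carry continuous unitary representations $U_A,U_B$; the reference $R$ has $d_R=d_B$ and carries $U_R(g)=\overline{U_B(g)}$. The $G$-twirl on $RX$ ($X=A,B$) is $\mathcal{G}(M)=\int dg\,(U_R(g)\otimes U_X(g))M(U_R(g)\otimes U_X(g))^\dagger$. $H_{\min}(R|X)_\Omega=-\log_2\inf_{Y\ge0}\{\mathrm{tr}[Y]:\mathbb{1}_R\otimes Y\ge\Omega_{RX}\}$; $H_\eta(\tau):=H_{\min}(R|X)_{\mathcal{G}(\eta\otimes\tau)}$; $\Delta H_\eta:=H_\eta(\sigma)-H_\eta(\rho)$. *)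

theory Defs
  imports "HOL-Probability.Probability" "Jordan_Normal_Form.Schur_Decomposition"
begin

(* Complex numbers carry the partial order of HOL-Library.Complex_Order
   (imported via Jordan_Normal_Form): z \<le> w iff Re z \<le> Re w and Im z = Im w. *)

definition mtrace :: "complex mat \<Rightarrow> complex" where
  "mtrace A = (\<Sum>i<dim_row A. A $$ (i, i))"

text \<open>Kronecker (tensor) product; the first factor is the outer index.\<close>
definition kron :: "complex mat \<Rightarrow> complex mat \<Rightarrow> complex mat" where
  "kron A B = mat (dim_row A * dim_row B) (dim_col A * dim_col B)
     (\<lambda>(i, j). A $$ (i div dim_row B, j div dim_col B) * B $$ (i mod dim_row B, j mod dim_col B))"

definition conj_mat :: "complex mat \<Rightarrow> complex mat" where
  "conj_mat A = map_mat cnj A"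

definition psd_mat :: "nat \<Rightarrow> complex mat \<Rightarrow> bool" where
  "psd_mat n M \<longleftrightarrow> M \<in> carrier_mat n n \<and>
     (\<forall>v \<in> carrier_vec n. 0 \<le> conjugate v \<bullet> (M *\<^sub>v v))"

definition loewner_le :: "nat \<Rightarrow> complex mat \<Rightarrow> complex mat \<Rightarrow> bool" where
  "loewner_le n A B \<longleftrightarrow> A \<in> carrier_mat n n \<and> B \<in> carrier_mat n n \<and> psd_mat n (B - A)"

definition is_state :: "nat \<Rightarrow> complex mat \<Rightarrow> bool" where
  "is_state n \<rho> \<longleftrightarrow> psd_mat n \<rho> \<and> mtrace \<rho> = 1"

definition unitary_mat :: "nat \<Rightarrow> complex mat \<Rightarrow> bool" where
  "unitary_mat n U \<longleftrightarrow> U \<in> carrier_mat n n \<and> U * mat_adjoint U = 1\<^sub>m n \<and> mat_adjoint U * U = 1\<^sub>m n"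

text \<open>Continuous unitary representation of the (additively written, not necessarily
  commutative) topological group 'g on C^d.\<close>
definition cont_unitary_rep :: "nat \<Rightarrow> ('g::topological_group_add \<Rightarrow> complex mat) \<Rightarrow> bool" where
  "cont_unitary_rep d U \<longleftrightarrow> (\<forall>g. unitary_mat d (U g)) \<and> (\<forall>g h. U (g + h) = U g * U h)
     \<and> (\<forall>i<d. \<forall>j<d. continuous_on UNIV (\<lambda>g. U g $$ (i, j)))"

definition haar_prob :: "'g::topological_group_add measure \<Rightarrow> bool" where
  "haar_prob \<mu> \<longleftrightarrow> sets \<mu> = sets borel \<and> prob_space \<mu> \<and>
     (\<forall>g. \<forall>S \<in> sets borel. measure \<mu> ((+) g ` S) = measure \<mu> S)"

definition twirl :: "'g measure \<Rightarrow> ('g \<Rightarrow> complex mat) \<Rightarrow> ('g \<Rightarrow> complex mat)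
    \<Rightarrow> nat \<Rightarrow> nat \<Rightarrow> complex mat \<Rightarrow> complex mat" where
  "twirl \<mu> UR UX dR dX M = mat (dR * dX) (dR * dX) (\<lambda>(i, j).
     integral\<^sup>L \<mu> (\<lambda>g. (kron (UR g) (UX g) * M * mat_adjoint (kron (UR g) (UX g))) $$ (i, j)))"

definition Hmin :: "nat \<Rightarrow> nat \<Rightarrow> complex mat \<Rightarrow> real" where
  "Hmin dR dX \<Omega> = - log 2 (Inf {Re (mtrace Y) | Y. psd_mat dX Y \<and>
       loewner_le (dR * dX) \<Omega> (kron (1\<^sub>m dR) Y)})"

definition H_eta :: "'g measure \<Rightarrow> ('g \<Rightarrow> complex mat) \<Rightarrow> nat \<Rightarrow> ('g \<Rightarrow> complex mat) \<Rightarrow> nat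
    \<Rightarrow> complex mat \<Rightarrow> complex mat \<Rightarrow> real" where
  "H_eta \<mu> UB dB UX dX \<eta> \<tau> = Hmin dB dX (twirl \<mu> (\<lambda>g. conj_mat (UB g)) UX dB dX (kron \<eta> \<tau>))"

definition Delta_H :: "'g measure \<Rightarrow> ('g \<Rightarrow> complex mat) \<Rightarrow> nat \<Rightarrow> ('g \<Rightarrow> complex mat) \<Rightarrow> nat
    \<Rightarrow> complex mat \<Rightarrow> complex mat \<Rightarrow> complex mat \<Rightarrow> real" where
  "Delta_H \<mu> UA dA UB dB \<rho> \<sigma> \<eta> = H_eta \<mu> UB dB UB dB \<eta> \<sigma> - H_eta \<mu> UB dB UA dA \<eta> \<rho>"

definition depol :: "nat \<Rightarrow> real \<Rightarrow> complex mat \<Rightarrow> complex mat" where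
  "depol d p \<eta> = complex_of_real p \<cdot>\<^sub>m \<eta> + complex_of_real ((1 - p) / real d) \<cdot>\<^sub>m 1\<^sub>m d"

end

theory Submission
  imports Defs
begin

(* Twirling is linear, so with \<Lambda>\<^sub>p(\<eta>) = p \<eta> + (1 - p) 1/d the twirled state
   \<Omega> = G(\<eta> \<otimes> \<tau>) becomes p \<Omega> + (1 - p)/d (1 \<otimes> \<tau>'), where \<tau>' is the twirl of \<tau> on X
   alone; \<tau>' is also the partial trace of \<Omega> over R. Every feasible Y of the min-entropy
   program for \<Omega> satisfies d Y \<ge> tr\<^sub>R \<Omega> = \<tau>', so Y \<mapsto> p Y + (1 - p)/d \<tau>' is a bijection
   between the feasible sets, and the optimal value a = 2 ^ (- H\<^sub>\<eta>(\<tau>)) becomes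
   p a + (1 - p)/d. This increasing affine map acts on the values for \<rho> and for \<sigma> alike,
   so the sign of \<Delta>H is unchanged. *)

lemma sum_lessThan_mult_nat:
  fixes f :: "nat \<Rightarrow> 'a::comm_monoid_add"
  shows "(\<Sum>t<b*n. f t) = (\<Sum>s<b. \<Sum>u<n. f (s*n+u))"
proof -
  have "sum f {s*n..<s*n+n} = (\<Sum>u<n. f (s*n+u))" for s
    using sum.shift_bounds_nat_ivl[of f 0 "s*n" n] by (simp add: add.commute atLeast0LessThan)
  then show ?thesis
    using sum.nat_group[of f n b] by simp
qed

lemma sum_lessThan_mult_delta [simp]:
  fixes f :: "nat \<Rightarrow> 'a::semiring_1"
  assumes "j < n"
  shows "(\<Sum>l<n. f l * (if l = j then 1 else 0)) = f j"
    and "(\<Sum>l<n. (if l = j then 1 else 0) * f l) = f j"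
  using assms
  by (simp_all add: if_distrib[where f="\<lambda>x. f _ * x"] if_distrib[where f="\<lambda>x. x * f _"] cong: if_cong)

lemma mult_add_div_mod_nat [simp]:
  fixes s u n :: nat
  assumes "u < n"
  shows "(s*n+u) div n = s" "(s*n+u) mod n = u"
  using assms by auto

lemma mult_add_less_mult_nat:
  fixes s u b n :: nat
  assumes "s < b" "u < n"
  shows "s*n+u < b*n"
proof -
  have "s*n+u < Suc s * n" using assms by simp
  also have "\<dots> \<le> b*n" using assms by (intro mult_right_mono) auto
  finally show ?thesis .
qed

lemma div_mod_less_of_less_mult_nat:
  fixes i a m :: nat
  assumes "i < a*m"
  shows "i div m < a" "i mod m < m"
proof -
  show "i div m < a" using assms less_mult_imp_div_less by blast
  have "m > 0" using assms by (cases m) auto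
  then show "i mod m < m" by simp
qed

lemma cInf_image_affine:
  fixes S :: "real set"
  assumes "S \<noteq> {}" "bdd_below S" "0 < p"
  shows "Inf ((\<lambda>s. p * s + c) ` S) = p * Inf S + c"
proof -
  have "mono (\<lambda>s. p * s + c)" "continuous (at_right (Inf S)) (\<lambda>s. p * s + c)"
    using assms(3) by (auto intro!: monoI continuous_intros)
  then show ?thesis
    using continuous_at_Inf_mono[of "\<lambda>s. p * s + c" S] assms(1,2) by simp
qed

section \<open>Kronecker products, adjoints and sandwiches\<close>

lemma index_mult_mat_sum:
  assumes "A \<in> carrier_mat m k" "B \<in> carrier_mat k n" "i < m" "j < n"
  shows "(A * B) $$ (i,j) = (\<Sum>t<k. A $$ (i,t) * B $$ (t,j))"
  using assms by (simp add: scalar_prod_def atLeast0LessThan)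

declare index_mult_mat(1) [simp del]

lemma mat_adjoint_eq: "mat_adjoint A = mat (dim_col A) (dim_row A) (\<lambda>(i,j). cnj (A $$ (j,i)))"
  by (auto intro!: eq_matI simp: mat_adjoint_def mat_of_rows_index)

lemma mat_adjoint_carrier_mat [simp]:
  fixes A :: "complex mat"
  shows "A \<in> carrier_mat m n \<Longrightarrow> mat_adjoint A \<in> carrier_mat n m"
  by (simp add: mat_adjoint_eq)

lemma dim_mat_adjoint [simp]:
  fixes A :: "complex mat"
  shows "dim_row (mat_adjoint A) = dim_col A" "dim_col (mat_adjoint A) = dim_row A"
  by (simp_all add: mat_adjoint_eq)

lemma index_mat_adjoint [simp]:
  fixes A :: "complex mat"
  shows "i < dim_col A \<Longrightarrow> j < dim_row A \<Longrightarrow> mat_adjoint A $$ (i,j) = cnj (A $$ (j,i))"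
  by (simp add: mat_adjoint_eq)

lemma conj_mat_carrier_mat [simp]: "A \<in> carrier_mat m n \<Longrightarrow> conj_mat A \<in> carrier_mat m n"
  by (simp add: conj_mat_def)

lemma index_conj_mat [simp]:
  "i < dim_row A \<Longrightarrow> j < dim_col A \<Longrightarrow> conj_mat A $$ (i,j) = cnj (A $$ (i,j))"
  "dim_row (conj_mat A) = dim_row A" "dim_col (conj_mat A) = dim_col A"
  by (simp_all add: conj_mat_def)

lemma smult_one_mat [simp]: "(1::'a::monoid_mult) \<cdot>\<^sub>m A = A"
  by (intro eq_matI) auto

lemma dim_kron [simp]:
  "dim_row (kron A B) = dim_row A * dim_row B" "dim_col (kron A B) = dim_col A * dim_col B"
  by (simp_all add: kron_def)

lemma kron_carrier_mat [simp]:
  "A \<in> carrier_mat a b \<Longrightarrow> B \<in> carrier_mat m n \<Longrightarrow> kron A B \<in> carrier_mat (a*m) (b*n)"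
  by (simp add: kron_def)

lemma index_kron:
  assumes "A \<in> carrier_mat a b" "B \<in> carrier_mat m n" "i < a*m" "j < b*n"
  shows "kron A B $$ (i,j) = A $$ (i div m, j div n) * B $$ (i mod m, j mod n)"
  using assms by (simp add: kron_def)

lemma index_kron_one_left:
  assumes "B \<in> carrier_mat n n" "i < d*n" "j < d*n"
  shows "kron (1\<^sub>m d) B $$ (i,j) = (if i div n = j div n then B $$ (i mod n, j mod n) else 0)"
  using assms div_mod_less_of_less_mult_nat[of i d n] div_mod_less_of_less_mult_nat[of j d n]
  by (simp add: index_kron[of "1\<^sub>m d" d d B n n])

lemma kron_mult:
  assumes A: "A \<in> carrier_mat a b" and B: "B \<in> carrier_mat m n"
    and C: "C \<in> carrier_mat b c" and D: "D \<in> carrier_mat n q"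
  shows "kron A B * kron C D = kron (A * C) (B * D)"
proof (rule eq_matI)
  fix i j assume "i < dim_row (kron (A * C) (B * D))" "j < dim_col (kron (A * C) (B * D))"
  then have i: "i < a*m" and j: "j < c*q" using A B C D by auto
  note ib = div_mod_less_of_less_mult_nat[OF i] and jb = div_mod_less_of_less_mult_nat[OF j]
  have "(kron A B * kron C D) $$ (i,j) = (\<Sum>t<b*n. kron A B $$ (i,t) * kron C D $$ (t,j))"
    using A B C D i j by (intro index_mult_mat_sum) auto
  also have "\<dots> = (\<Sum>s<b. \<Sum>u<n. kron A B $$ (i,s*n+u) * kron C D $$ (s*n+u,j))"
    by (rule sum_lessThan_mult_nat)
  also have "\<dots> = (\<Sum>s<b. \<Sum>u<n. (A $$ (i div m, s) * C $$ (s, j div q)) *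
                                   (B $$ (i mod m, u) * D $$ (u, j mod q)))"
    using A B C D i j mult_add_less_mult_nat
    by (intro sum.cong refl) (simp add: index_kron[OF A B] index_kron[OF C D])
  also have "\<dots> = (\<Sum>s<b. A $$ (i div m, s) * C $$ (s, j div q)) *
                  (\<Sum>u<n. B $$ (i mod m, u) * D $$ (u, j mod q))"
    by (simp add: sum_product)
  also have "\<dots> = kron (A * C) (B * D) $$ (i,j)"
    using A B C D i j ib jb
    by (simp add: index_kron[of "A * C" a c "B * D" m q] index_mult_mat_sum[OF A C]
        index_mult_mat_sum[OF B D])
  finally show "(kron A B * kron C D) $$ (i,j) = kron (A * C) (B * D) $$ (i,j)" .
qed (use A B C D in auto)

lemma mat_adjoint_kron:
  assumes A: "A \<in> carrier_mat a b" and B: "B \<in> carrier_mat m n"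
  shows "mat_adjoint (kron A B) = kron (mat_adjoint A) (mat_adjoint B)"
proof (rule eq_matI)
  fix i j
  assume "i < dim_row (kron (mat_adjoint A) (mat_adjoint B))"
    and "j < dim_col (kron (mat_adjoint A) (mat_adjoint B))"
  then have i: "i < b*n" and j: "j < a*m" using A B by auto
  then show "mat_adjoint (kron A B) $$ (i,j) = kron (mat_adjoint A) (mat_adjoint B) $$ (i,j)"
    using A B div_mod_less_of_less_mult_nat[OF i] div_mod_less_of_less_mult_nat[OF j]
    by (simp add: index_kron[OF A B] index_kron[of "mat_adjoint A" b a "mat_adjoint B" n m])
qed (use A B in auto)

lemma kron_add_smult_left:
  assumes A: "A \<in> carrier_mat a b" and B: "B \<in> carrier_mat a b" and C: "C \<in> carrier_mat m n"
  shows "kron (x \<cdot>\<^sub>m A + y \<cdot>\<^sub>m B) C = x \<cdot>\<^sub>m kron A C + y \<cdot>\<^sub>m kron B C"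
  using assms div_mod_less_of_less_mult_nat
  by (intro eq_matI) (auto simp: index_kron[of _ a b C m n] algebra_simps)

lemma kron_add_smult_right:
  assumes A: "A \<in> carrier_mat a b" and B: "B \<in> carrier_mat m n" and C: "C \<in> carrier_mat m n"
  shows "kron A (x \<cdot>\<^sub>m B + y \<cdot>\<^sub>m C) = x \<cdot>\<^sub>m kron A B + y \<cdot>\<^sub>m kron A C"
proof (rule eq_matI)
  fix i j assume "i < dim_row (x \<cdot>\<^sub>m kron A B + y \<cdot>\<^sub>m kron A C)" "j < dim_col (x \<cdot>\<^sub>m kron A B + y \<cdot>\<^sub>m kron A C)"
  then have "i < a*m" "j < b*n" using assms by auto
  with assms div_mod_less_of_less_mult_nat[of i a m] div_mod_less_of_less_mult_nat[of j b n]
  show "kron A (x \<cdot>\<^sub>m B + y \<cdot>\<^sub>m C) $$ (i,j) = (x \<cdot>\<^sub>m kron A B + y \<cdot>\<^sub>m kron A C) $$ (i,j)"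
    by (simp add: index_kron[of A a b _ m n] algebra_simps)
qed (use assms in auto)

lemma kron_smult_right:
  assumes A: "A \<in> carrier_mat a b" and B: "B \<in> carrier_mat m n"
  shows "kron A (x \<cdot>\<^sub>m B) = x \<cdot>\<^sub>m kron A B"
  using assms div_mod_less_of_less_mult_nat
  by (intro eq_matI) (auto simp: index_kron[of A a b _ m n])

lemma kron_one_one: "kron (1\<^sub>m d) (1\<^sub>m n) = 1\<^sub>m (d*n)"
proof (rule eq_matI)
  fix i j assume "i < dim_row (1\<^sub>m (d*n))" "j < dim_col (1\<^sub>m (d*n))"
  then have ij: "i < d*n" "j < d*n" by auto
  have "(i div n = j div n \<and> i mod n = j mod n) \<longleftrightarrow> i = j"
    by (metis div_mult_mod_eq)
  moreover have "kron (1\<^sub>m d) (1\<^sub>m n) $$ (i,j) =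
      (if i div n = j div n then 1\<^sub>m n $$ (i mod n, j mod n) else 0)"
    using ij by (intro index_kron_one_left) auto
  ultimately show "kron (1\<^sub>m d) (1\<^sub>m n) $$ (i,j) = 1\<^sub>m (d*n) $$ (i,j)"
    using ij div_mod_less_of_less_mult_nat[of _ d n] by auto
qed auto

lemma unitary_mat_carrier_mat: "unitary_mat n U \<Longrightarrow> U \<in> carrier_mat n n"
  by (simp add: unitary_mat_def)

lemma unitary_mat_orthonormal:
  assumes "unitary_mat n U" "i < n" "j < n"
  shows "(\<Sum>t<n. U $$ (i,t) * cnj (U $$ (j,t))) = (if i = j then 1 else 0)"
    and "(\<Sum>t<n. cnj (U $$ (t,i)) * U $$ (t,j)) = (if i = j then 1 else 0)"
proof -
  have U: "U \<in> carrier_mat n n" using assms(1) by (rule unitary_mat_carrier_mat)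
  have "(U * mat_adjoint U) $$ (i,j) = 1\<^sub>m n $$ (i,j)" "(mat_adjoint U * U) $$ (i,j) = 1\<^sub>m n $$ (i,j)"
    using assms unfolding unitary_mat_def by auto
  then show "(\<Sum>t<n. U $$ (i,t) * cnj (U $$ (j,t))) = (if i = j then 1 else 0)"
    and "(\<Sum>t<n. cnj (U $$ (t,i)) * U $$ (t,j)) = (if i = j then 1 else 0)"
    using assms U by (simp_all add: index_mult_mat_sum[of _ n n _ n])
qed

lemma unitary_mat_conj_mat:
  assumes U: "unitary_mat n U"
  shows "unitary_mat n (conj_mat U)"
proof -
  have Uc: "U \<in> carrier_mat n n" using U by (rule unitary_mat_carrier_mat)
  have "(conj_mat U * mat_adjoint (conj_mat U)) $$ (i,j) = 1\<^sub>m n $$ (i,j)"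
    and "(mat_adjoint (conj_mat U) * conj_mat U) $$ (i,j) = 1\<^sub>m n $$ (i,j)"
    if "i < n" "j < n" for i j
  proof -
    have "(conj_mat U * mat_adjoint (conj_mat U)) $$ (i,j) = cnj (\<Sum>t<n. U $$ (i,t) * cnj (U $$ (j,t)))"
      and "(mat_adjoint (conj_mat U) * conj_mat U) $$ (i,j) = cnj (\<Sum>t<n. cnj (U $$ (t,i)) * U $$ (t,j))"
      using Uc that by (simp_all add: index_mult_mat_sum[of _ n n _ n])
    then show "(conj_mat U * mat_adjoint (conj_mat U)) $$ (i,j) = 1\<^sub>m n $$ (i,j)"
      and "(mat_adjoint (conj_mat U) * conj_mat U) $$ (i,j) = 1\<^sub>m n $$ (i,j)"
      using unitary_mat_orthonormal[OF U that] that by simp_all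
  qed
  then show ?thesis
    using Uc unfolding unitary_mat_def by (auto intro!: eq_matI)
qed

definition sandwich :: "complex mat \<Rightarrow> complex mat \<Rightarrow> complex mat" where
  "sandwich V A = V * A * mat_adjoint V"

lemma dim_sandwich [simp]:
  "dim_row (sandwich V A) = dim_row V" "dim_col (sandwich V A) = dim_row V"
  by (simp_all add: sandwich_def)

lemma sandwich_carrier_mat [simp]:
  "V \<in> carrier_mat m n \<Longrightarrow> A \<in> carrier_mat n n \<Longrightarrow> sandwich V A \<in> carrier_mat m m"
  unfolding sandwich_def by (intro mult_carrier_mat) auto

lemma index_sandwich:
  assumes "V \<in> carrier_mat m n" "A \<in> carrier_mat n n" "i < m" "j < m"
  shows "sandwich V A $$ (i,j) = (\<Sum>k<n. \<Sum>l<n. V $$ (i,k) * A $$ (k,l) * cnj (V $$ (j,l)))"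
proof -
  have "sandwich V A $$ (i,j) = (\<Sum>l<n. \<Sum>k<n. V $$ (i,k) * A $$ (k,l) * cnj (V $$ (j,l)))"
    using assms unfolding sandwich_def
    by (simp add: index_mult_mat_sum[of "V * A" m n _ m] index_mult_mat_sum[of V m n A n]
        sum_distrib_right)
  also have "\<dots> = (\<Sum>k<n. \<Sum>l<n. V $$ (i,k) * A $$ (k,l) * cnj (V $$ (j,l)))"
    by (rule sum.swap)
  finally show ?thesis .
qed

lemma sandwich_kron:
  assumes V: "V \<in> carrier_mat d d" and U: "U \<in> carrier_mat n n"
    and A: "A \<in> carrier_mat d d" and B: "B \<in> carrier_mat n n"
  shows "sandwich (kron V U) (kron A B) = kron (sandwich V A) (sandwich U B)"
proof -
  have "kron (V * A) (U * B) * kron (mat_adjoint V) (mat_adjoint U) =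
      kron (V * A * mat_adjoint V) (U * B * mat_adjoint U)"
    using assms by (intro kron_mult) auto
  then show ?thesis
    unfolding sandwich_def using assms by (simp add: kron_mult[OF V U A B] mat_adjoint_kron[OF V U])
qed

lemma sandwich_add_smult:
  assumes "V \<in> carrier_mat m n" "A \<in> carrier_mat n n" "B \<in> carrier_mat n n"
  shows "sandwich V (x \<cdot>\<^sub>m A + y \<cdot>\<^sub>m B) = x \<cdot>\<^sub>m sandwich V A + y \<cdot>\<^sub>m sandwich V B"
proof (rule eq_matI)
  fix i j assume "i < dim_row (x \<cdot>\<^sub>m sandwich V A + y \<cdot>\<^sub>m sandwich V B)"
    "j < dim_col (x \<cdot>\<^sub>m sandwich V A + y \<cdot>\<^sub>m sandwich V B)"
  with assms show "sandwich V (x \<cdot>\<^sub>m A + y \<cdot>\<^sub>m B) $$ (i,j) = (x \<cdot>\<^sub>m sandwich V A + y \<cdot>\<^sub>m sandwich V B) $$ (i,j)"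
    by (simp add: index_sandwich[of V m n] sum.distrib sum_distrib_left algebra_simps)
qed (use assms in auto)

lemma sandwich_one:
  assumes "unitary_mat n U"
  shows "sandwich U (1\<^sub>m n) = 1\<^sub>m n"
  using assms unfolding unitary_mat_def sandwich_def by auto

lemma mtrace_carrier_mat: "A \<in> carrier_mat n n \<Longrightarrow> mtrace A = (\<Sum>i<n. A $$ (i,i))"
  by (simp add: mtrace_def)

lemma mtrace_sandwich:
  assumes V: "unitary_mat m V" and A: "A \<in> carrier_mat m m"
  shows "mtrace (sandwich V A) = mtrace A"
proof -
  have Vc: "V \<in> carrier_mat m m" using V by (rule unitary_mat_carrier_mat)
  have "mtrace (sandwich V A) = (\<Sum>r<m. \<Sum>k<m. \<Sum>l<m. V $$ (r,k) * A $$ (k,l) * cnj (V $$ (r,l)))"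
    using Vc A by (simp add: mtrace_def index_sandwich)
  also have "\<dots> = (\<Sum>k<m. \<Sum>l<m. \<Sum>r<m. V $$ (r,k) * A $$ (k,l) * cnj (V $$ (r,l)))"
    by (subst sum.swap) (rule sum.cong[OF refl], rule sum.swap)
  also have "\<dots> = (\<Sum>k<m. \<Sum>l<m. A $$ (k,l) * (\<Sum>r<m. cnj (V $$ (r,l)) * V $$ (r,k)))"
    by (simp add: sum_distrib_left algebra_simps)
  also have "\<dots> = (\<Sum>k<m. \<Sum>l<m. A $$ (k,l) * (if l = k then 1 else 0))"
    by (intro sum.cong refl) (simp add: unitary_mat_orthonormal(2)[OF V])
  also have "\<dots> = mtrace A"
    using A by (simp add: mtrace_carrier_mat)
  finally show ?thesis .
qed

section \<open>Sesquilinear forms and positivity\<close>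

definition sesq_form :: "nat \<Rightarrow> complex mat \<Rightarrow> complex vec \<Rightarrow> complex vec \<Rightarrow> complex" where
  "sesq_form n M u w = (\<Sum>i<n. \<Sum>j<n. cnj (u $ i) * M $$ (i,j) * w $ j)"

definition hermitian_mat :: "nat \<Rightarrow> complex mat \<Rightarrow> bool" where
  "hermitian_mat n M \<longleftrightarrow> (\<forall>i<n. \<forall>j<n. M $$ (i,j) = cnj (M $$ (j,i)))"

lemma sesq_form_eq_scalar_prod:
  assumes "M \<in> carrier_mat n n" "u \<in> carrier_vec n" "w \<in> carrier_vec n"
  shows "sesq_form n M u w = conjugate u \<bullet> (M *\<^sub>v w)"
  using assms by (simp add: sesq_form_def scalar_prod_def atLeast0LessThan sum_distrib_left mult.assoc)

lemma hermitian_mat_cnj_index [simp]: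
  "hermitian_mat n M \<Longrightarrow> i < n \<Longrightarrow> j < n \<Longrightarrow> cnj (M $$ (i,j)) = M $$ (j,i)"
  unfolding hermitian_mat_def by (metis complex_cnj_cnj)

lemma psd_mat_iff_sesq_form:
  "psd_mat n M \<longleftrightarrow> M \<in> carrier_mat n n \<and> (\<forall>v \<in> carrier_vec n. 0 \<le> sesq_form n M v v)"
  unfolding psd_mat_def by (auto simp: sesq_form_eq_scalar_prod)

lemma psd_mat_carrier_mat: "psd_mat n M \<Longrightarrow> M \<in> carrier_mat n n"
  by (simp add: psd_mat_def)

lemma sesq_form_unit_vec [simp]:
  assumes "i < n" "j < n"
  shows "sesq_form n M (unit_vec n i) (unit_vec n j) = M $$ (i,j)"
proof -
  have "cnj (unit_vec n i $ k) * M $$ (k,l) * unit_vec n j $ l =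
      (if k = i then 1 else 0) * (M $$ (k,l) * (if l = j then 1 else 0))" if "k < n" "l < n" for k l
    using assms that by simp
  then have "sesq_form n M (unit_vec n i) (unit_vec n j) =
      (\<Sum>k<n. (if k = i then 1 else 0) * (\<Sum>l<n. M $$ (k,l) * (if l = j then 1 else 0)))"
    unfolding sesq_form_def sum_distrib_left by (intro sum.cong refl) auto
  then show ?thesis
    using assms by simp
qed

lemma sesq_form_add_smult_left:
  assumes "u \<in> carrier_vec n" "u' \<in> carrier_vec n"
  shows "sesq_form n M (u + y \<cdot>\<^sub>v u') w = sesq_form n M u w + cnj y * sesq_form n M u' w"
  using assms by (simp add: sesq_form_def sum.distrib sum_distrib_left algebra_simps)

lemma sesq_form_add_smult_right:
  assumes "w \<in> carrier_vec n" "w' \<in> carrier_vec n"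
  shows "sesq_form n M u (w + y \<cdot>\<^sub>v w') = sesq_form n M u w + y * sesq_form n M u w'"
  using assms by (simp add: sesq_form_def sum.distrib sum_distrib_left algebra_simps)

lemma sesq_form_lincomb_mat:
  assumes "A \<in> carrier_mat n n" "B \<in> carrier_mat n n"
  shows "sesq_form n (x \<cdot>\<^sub>m A + y \<cdot>\<^sub>m B) u w = x * sesq_form n A u w + y * sesq_form n B u w"
  using assms by (simp add: sesq_form_def sum.distrib sum_distrib_left algebra_simps)

lemma sesq_form_hermitian_swap:
  assumes "hermitian_mat n M"
  shows "sesq_form n M w u = cnj (sesq_form n M u w)"
proof -
  have "sesq_form n M w u = (\<Sum>j<n. \<Sum>i<n. cnj (w $ j) * M $$ (j,i) * u $ i)"
    unfolding sesq_form_def ..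
  also have "\<dots> = (\<Sum>i<n. \<Sum>j<n. cnj (w $ j) * M $$ (j,i) * u $ i)"
    by (rule sum.swap)
  also have "\<dots> = cnj (sesq_form n M u w)"
    using assms unfolding sesq_form_def by (simp add: ac_simps)
  finally show ?thesis .
qed

lemma sesq_form_hermitian_real:
  assumes "hermitian_mat n M"
  shows "Im (sesq_form n M v v) = 0"
  using sesq_form_hermitian_swap[OF assms, of v v] by (metis Reals_cnj_iff complex_is_Real_iff)

text \<open>Polarization: the complex order makes every value of the form real, which forces hermiticity.\<close>

lemma psd_mat_hermitian:
  assumes "psd_mat n M"
  shows "hermitian_mat n M"
  unfolding hermitian_mat_def
proof (intro allI impI)
  fix i j assume ij: "i < n" "j < n"
  have real: "Im (sesq_form n M v v) = 0" if "v \<in> carrier_vec n" for v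
    using assms that by (auto simp: psd_mat_iff_sesq_form less_eq_complex_def)
  have diag: "Im (M $$ (k,k)) = 0" if "k < n" for k
    using real[of "unit_vec n k"] that by simp
  show "M $$ (i,j) = cnj (M $$ (j,i))"
  proof (cases "i = j")
    case True
    then show ?thesis using diag[OF ij(1)] by (simp add: complex_eq_iff)
  next
    case False
    have "sesq_form n M (unit_vec n i + y \<cdot>\<^sub>v unit_vec n j) (unit_vec n i + y \<cdot>\<^sub>v unit_vec n j) =
        M $$ (i,i) + y * M $$ (i,j) + cnj y * M $$ (j,i) + cnj y * y * M $$ (j,j)" for y
      using ij by (simp add: sesq_form_add_smult_left sesq_form_add_smult_right algebra_simps)
    from this[of 1] this[of \<i>] real[of "unit_vec n i + 1 \<cdot>\<^sub>v unit_vec n j"]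
      real[of "unit_vec n i + \<i> \<cdot>\<^sub>v unit_vec n j"] diag[OF ij(1)] diag[OF ij(2)]
    show ?thesis
      by (simp add: complex_eq_iff)
  qed
qed

lemma psd_mat_lincomb:
  assumes "psd_mat n A" "psd_mat n B" "0 \<le> x" "0 \<le> y"
  shows "psd_mat n (complex_of_real x \<cdot>\<^sub>m A + complex_of_real y \<cdot>\<^sub>m B)"
  using assms
  by (auto simp: psd_mat_iff_sesq_form sesq_form_lincomb_mat less_eq_complex_def)

lemma sesq_form_smult_mat:
  assumes "A \<in> carrier_mat n n"
  shows "sesq_form n (x \<cdot>\<^sub>m A) u w = x * sesq_form n A u w"
  using assms by (simp add: sesq_form_def sum_distrib_left algebra_simps)

lemma psd_mat_smult:
  assumes "psd_mat n A" "0 \<le> x"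
  shows "psd_mat n (complex_of_real x \<cdot>\<^sub>m A)"
  using assms by (auto simp: psd_mat_iff_sesq_form sesq_form_smult_mat less_eq_complex_def)

lemma psd_mat_smult_iff:
  assumes "A \<in> carrier_mat n n" "0 < x"
  shows "psd_mat n (complex_of_real x \<cdot>\<^sub>m A) \<longleftrightarrow> psd_mat n A"
  using assms
  by (auto simp: psd_mat_iff_sesq_form sesq_form_smult_mat less_eq_complex_def zero_le_mult_iff)

lemma sesq_form_one_mat: "sesq_form n (1\<^sub>m n) v v = of_real (\<Sum>k<n. (cmod (v $ k))\<^sup>2)"
proof -
  have "sesq_form n (1\<^sub>m n) v v = (\<Sum>i<n. cnj (v $ i) * v $ i)"
    unfolding sesq_form_def by (intro sum.cong refl) (simp add: if_distrib[where f="\<lambda>x. _ * x * _"] cong: if_cong)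
  also have "\<dots> = (\<Sum>i<n. of_real ((cmod (v $ i))\<^sup>2))"
    by (intro sum.cong refl) (metis complex_norm_square mult.commute)
  finally show ?thesis by simp
qed

lemma psd_mat_one_mat: "psd_mat n (1\<^sub>m n)"
  by (simp add: psd_mat_iff_sesq_form sesq_form_one_mat sum_nonneg less_eq_complex_def)

lemma norm_sesq_form_le:
  "cmod (sesq_form n M v v) \<le> (\<Sum>i<n. \<Sum>j<n. cmod (M $$ (i,j))) * (\<Sum>k<n. (cmod (v $ k))\<^sup>2)"
proof -
  let ?N = "\<Sum>k<n. (cmod (v $ k))\<^sup>2"
  have "cmod (v $ i) \<le> sqrt ?N" if "i < n" for i
    using that by (intro real_le_rsqrt member_le_sum) auto
  then have entry: "cmod (v $ i) * cmod (v $ j) \<le> ?N" if "i < n" "j < n" for i j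
    using that mult_mono[of "cmod (v $ i)" "sqrt ?N" "cmod (v $ j)" "sqrt ?N"]
    by (simp add: sum_nonneg)
  have "cmod (sesq_form n M v v) \<le> (\<Sum>i<n. \<Sum>j<n. cmod (M $$ (i,j)) * (cmod (v $ i) * cmod (v $ j)))"
    unfolding sesq_form_def
    by (rule order_trans[OF norm_sum sum_mono], rule order_trans[OF norm_sum])
       (simp add: norm_mult algebra_simps)
  also have "\<dots> \<le> (\<Sum>i<n. \<Sum>j<n. cmod (M $$ (i,j)) * ?N)"
    using entry by (intro sum_mono mult_left_mono) auto
  finally show ?thesis
    by (simp add: sum_distrib_right)
qed

lemma conjugate_scalar_prod_mult_mat_vec:
  fixes V :: "complex mat" and u x :: "complex vec"
  assumes V: "V \<in> carrier_mat m n" and u: "u \<in> carrier_vec m" and x: "x \<in> carrier_vec n"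
  shows "conjugate u \<bullet> (V *\<^sub>v x) = conjugate (mat_adjoint V *\<^sub>v u) \<bullet> x"
proof -
  have "conjugate u \<bullet> (V *\<^sub>v x) = (\<Sum>i<m. \<Sum>k<n. cnj (u $ i) * V $$ (i,k) * x $ k)"
    using assms by (simp add: scalar_prod_def atLeast0LessThan sum_distrib_left mult.assoc)
  also have "\<dots> = (\<Sum>k<n. \<Sum>i<m. cnj (u $ i) * V $$ (i,k) * x $ k)"
    by (rule sum.swap)
  also have "\<dots> = (\<Sum>k<n. cnj (\<Sum>i<m. cnj (V $$ (i,k)) * u $ i) * x $ k)"
    by (simp add: sum_distrib_left sum_distrib_right mult_ac)
  also have "\<dots> = conjugate (mat_adjoint V *\<^sub>v u) \<bullet> x"
    unfolding scalar_prod_def using assms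
    by (auto simp: atLeast0LessThan scalar_prod_def intro!: sum.cong)
  finally show ?thesis .
qed

lemma sesq_form_sandwich:
  assumes V: "V \<in> carrier_mat m m" and A: "A \<in> carrier_mat m m" and v: "v \<in> carrier_vec m"
  shows "sesq_form m (sandwich V A) v v = sesq_form m A (mat_adjoint V *\<^sub>v v) (mat_adjoint V *\<^sub>v v)"
proof -
  have w: "mat_adjoint V *\<^sub>v v \<in> carrier_vec m"
    using V v by (intro mult_mat_vec_carrier) auto
  have "sandwich V A *\<^sub>v v = V *\<^sub>v (A *\<^sub>v (mat_adjoint V *\<^sub>v v))"
    unfolding sandwich_def using assms w
    by (simp add: assoc_mult_mat_vec[of _ m m _ m] mult_carrier_mat[of V m m A m])
  then show ?thesis
    using assms w
    by (simp add: sesq_form_eq_scalar_prod conjugate_scalar_prod_mult_mat_vec[OF V _ mult_mat_vec_carrier[OF A]])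
qed

lemma psd_mat_sandwich:
  assumes V: "V \<in> carrier_mat n n" and A: "psd_mat n A"
  shows "psd_mat n (sandwich V A)"
  unfolding psd_mat_iff_sesq_form
proof (intro conjI ballI)
  fix v :: "complex vec" assume v: "v \<in> carrier_vec n"
  have "mat_adjoint V *\<^sub>v v \<in> carrier_vec n"
    using V v by (intro mult_mat_vec_carrier) auto
  then show "0 \<le> sesq_form n (sandwich V A) v v"
    using A V v by (simp add: psd_mat_iff_sesq_form sesq_form_sandwich)
qed (use V A in \<open>simp add: psd_mat_carrier_mat\<close>)

lemma hermitian_mat_sandwich:
  assumes V: "V \<in> carrier_mat m m" and A: "A \<in> carrier_mat m m" and H: "hermitian_mat m A"
  shows "hermitian_mat m (sandwich V A)"
  unfolding hermitian_mat_def
proof (intro allI impI)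
  fix i j assume ij: "i < m" "j < m"
  have "cnj (sandwich V A $$ (j,i)) = (\<Sum>k<m. \<Sum>l<m. V $$ (i,l) * A $$ (l,k) * cnj (V $$ (j,k)))"
    using H V A ij by (simp add: index_sandwich ac_simps)
  also have "\<dots> = (\<Sum>l<m. \<Sum>k<m. V $$ (i,l) * A $$ (l,k) * cnj (V $$ (j,k)))"
    by (rule sum.swap)
  also have "\<dots> = sandwich V A $$ (i,j)"
    using V A ij by (simp add: index_sandwich)
  finally show "sandwich V A $$ (i,j) = cnj (sandwich V A $$ (j,i))"
    by simp
qed

lemma hermitian_mat_kron:
  assumes "A \<in> carrier_mat a a" "B \<in> carrier_mat b b" "hermitian_mat a A" "hermitian_mat b B"
  shows "hermitian_mat (a*b) (kron A B)"
  using assms div_mod_less_of_less_mult_nat[of _ a b]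
  unfolding hermitian_mat_def[of "a*b"] by (simp add: index_kron)

section \<open>Partial trace and the min-entropy program\<close>

definition partial_trace_fst :: "nat \<Rightarrow> nat \<Rightarrow> complex mat \<Rightarrow> complex mat" where
  "partial_trace_fst d n M = mat n n (\<lambda>(k,l). \<Sum>r<d. M $$ (r*n+k, r*n+l))"

lemma partial_trace_fst_carrier_mat [simp]: "partial_trace_fst d n M \<in> carrier_mat n n"
  by (simp add: partial_trace_fst_def)

lemma dim_partial_trace_fst [simp]:
  "dim_row (partial_trace_fst d n M) = n" "dim_col (partial_trace_fst d n M) = n"
  by (simp_all add: partial_trace_fst_def)

lemma partial_trace_fst_kron:
  assumes A: "A \<in> carrier_mat d d" and B: "B \<in> carrier_mat n n"
  shows "partial_trace_fst d n (kron A B) = mtrace A \<cdot>\<^sub>m B"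
  using assms mult_add_less_mult_nat[of _ d _ n]
  by (intro eq_matI) (auto simp: partial_trace_fst_def index_kron[OF A B] mtrace_carrier_mat sum_distrib_right)

lemma mtrace_lincomb:
  assumes "A \<in> carrier_mat n n" "B \<in> carrier_mat n n"
  shows "mtrace (x \<cdot>\<^sub>m A + y \<cdot>\<^sub>m B) = x * mtrace A + y * mtrace B"
  using assms by (simp add: mtrace_def sum.distrib sum_distrib_left)

text \<open>Testing \<open>1 \<otimes> Y - \<Omega>\<close> on a vector supported in the \<open>r\<close>-th block gives the \<open>r\<close>-th diagonal
  block of \<open>\<Omega>\<close>; summing over \<open>r\<close> gives the partial trace.\<close>

lemma sum_block_delta:
  fixes f g :: "nat \<Rightarrow> complex"
  assumes "r < d"
  shows "(\<Sum>t<d*n. (if t div n = r then f (t mod n) else 0) * g t) = (\<Sum>u<n. f u * g (r*n+u))"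
proof -
  have "(\<Sum>t<d*n. (if t div n = r then f (t mod n) else 0) * g t)
      = (\<Sum>s<d. if s = r then (\<Sum>u<n. f u * g (s*n+u)) else 0)"
    unfolding sum_lessThan_mult_nat by (intro sum.cong refl) auto
  then show ?thesis
    using assms by simp
qed

lemma sesq_form_block_vec:
  assumes r: "r < d"
  shows "sesq_form (d*n) M (vec (d*n) (\<lambda>i. if i div n = r then w $ (i mod n) else 0))
                             (vec (d*n) (\<lambda>i. if i div n = r then w $ (i mod n) else 0))
       = (\<Sum>k<n. \<Sum>l<n. cnj (w $ k) * M $$ (r*n+k, r*n+l) * w $ l)"
proof -
  have "sesq_form (d*n) M (vec (d*n) (\<lambda>i. if i div n = r then w $ (i mod n) else 0))
                          (vec (d*n) (\<lambda>i. if i div n = r then w $ (i mod n) else 0))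
      = (\<Sum>i<d*n. (if i div n = r then cnj (w $ (i mod n)) else 0) *
                  (\<Sum>j<d*n. (if j div n = r then w $ (j mod n) else 0) * M $$ (i,j)))"
    unfolding sesq_form_def by (intro sum.cong refl) (auto simp: sum_distrib_left algebra_simps)
  also have "\<dots> = (\<Sum>i<d*n. (if i div n = r then cnj (w $ (i mod n)) else 0) *
                  (\<Sum>l<n. w $ l * M $$ (i, r*n+l)))"
    using sum_block_delta[OF r, where f="\<lambda>u. w $ u"] by simp
  also have "\<dots> = (\<Sum>k<n. cnj (w $ k) * (\<Sum>l<n. w $ l * M $$ (r*n+k, r*n+l)))"
    using r by (rule sum_block_delta)
  finally show ?thesis
    by (simp add: sum_distrib_left algebra_simps)
qed

lemma sesq_form_partial_trace_fst_le:
  assumes L: "loewner_le (d*n) \<Omega> (kron (1\<^sub>m d) Y)" and Y: "Y \<in> carrier_mat n n"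
    and w: "w \<in> carrier_vec n"
  shows "sesq_form n (partial_trace_fst d n \<Omega>) w w \<le> of_nat d * sesq_form n Y w w"
proof -
  let ?D = "kron (1\<^sub>m d) Y - \<Omega>"
  have \<Omega>: "\<Omega> \<in> carrier_mat (d*n) (d*n)" and psd: "psd_mat (d*n) ?D"
    using L unfolding loewner_le_def by auto
  have block: "?D $$ (r*n+k, r*n+l) = Y $$ (k,l) - \<Omega> $$ (r*n+k, r*n+l)"
    if "r < d" "k < n" "l < n" for r k l
    using that \<Omega> Y mult_add_less_mult_nat[of r d _ n] by (simp add: index_kron_one_left)
  have block_nonneg: "0 \<le> (\<Sum>k<n. \<Sum>l<n. cnj (w $ k) * ?D $$ (r*n+k, r*n+l) * w $ l)"
    if r: "r < d" for r
  proof -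
    have "vec (d*n) (\<lambda>i. if i div n = r then w $ (i mod n) else 0) \<in> carrier_vec (d*n)"
      by simp
    with psd have "0 \<le> sesq_form (d*n) ?D (vec (d*n) (\<lambda>i. if i div n = r then w $ (i mod n) else 0))
                                    (vec (d*n) (\<lambda>i. if i div n = r then w $ (i mod n) else 0))"
      unfolding psd_mat_iff_sesq_form by blast
    then show ?thesis
      using sesq_form_block_vec[OF r, of n ?D w] by simp
  qed
  have "0 \<le> (\<Sum>r<d. \<Sum>k<n. \<Sum>l<n. cnj (w $ k) * ?D $$ (r*n+k, r*n+l) * w $ l)"
    by (rule sum_nonneg) (simp add: block_nonneg)
  also have "\<dots> = (\<Sum>r<d. \<Sum>k<n. \<Sum>l<n. cnj (w $ k) * Y $$ (k,l) * w $ l -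
                                    cnj (w $ k) * \<Omega> $$ (r*n+k, r*n+l) * w $ l)"
    using block by (intro sum.cong refl) (simp add: right_diff_distrib left_diff_distrib)
  also have "\<dots> = of_nat d * sesq_form n Y w w -
                  (\<Sum>r<d. \<Sum>k<n. \<Sum>l<n. cnj (w $ k) * \<Omega> $$ (r*n+k, r*n+l) * w $ l)"
    by (simp add: sum_subtractf sesq_form_def)
  also have "(\<Sum>r<d. \<Sum>k<n. \<Sum>l<n. cnj (w $ k) * \<Omega> $$ (r*n+k, r*n+l) * w $ l) =
      (\<Sum>k<n. \<Sum>l<n. \<Sum>r<d. cnj (w $ k) * \<Omega> $$ (r*n+k, r*n+l) * w $ l)"
    by (subst sum.swap) (rule sum.cong[OF refl], rule sum.swap)
  also have "\<dots> = sesq_form n (partial_trace_fst d n \<Omega>) w w"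
    unfolding sesq_form_def partial_trace_fst_def
    by (intro sum.cong refl) (simp add: sum_distrib_left sum_distrib_right)
  finally show ?thesis
    by simp
qed

lemma psd_mat_of_loewner_le_kron_one:
  assumes L: "loewner_le (d*n) \<Omega> (kron (1\<^sub>m d) Y)" and Y: "Y \<in> carrier_mat n n"
    and d: "d > 0" and P: "psd_mat n (partial_trace_fst d n \<Omega>)"
  shows "psd_mat n Y"
  unfolding psd_mat_iff_sesq_form
proof (intro conjI ballI)
  fix w :: "complex vec" assume w: "w \<in> carrier_vec n"
  have "0 \<le> of_nat d * sesq_form n Y w w"
    using sesq_form_partial_trace_fst_le[OF L Y w] P w
    by (auto simp: psd_mat_iff_sesq_form intro: order_trans)
  then show "0 \<le> sesq_form n Y w w"
    using d by (auto simp: less_eq_complex_def zero_le_mult_iff)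
qed (rule Y)

lemma mtrace_partial_trace_fst_le:
  assumes L: "loewner_le (d*n) \<Omega> (kron (1\<^sub>m d) Y)" and Y: "Y \<in> carrier_mat n n"
  shows "Re (mtrace (partial_trace_fst d n \<Omega>)) \<le> real d * Re (mtrace Y)"
proof -
  have "Re (partial_trace_fst d n \<Omega> $$ (k,k)) \<le> real d * Re (Y $$ (k,k))" if "k < n" for k
    using sesq_form_partial_trace_fst_le[OF L Y, of "unit_vec n k"] that
    by (simp add: less_eq_complex_def)
  then show ?thesis
    using Y by (auto simp: mtrace_def Re_sum sum_distrib_left intro!: sum_mono)
qed

definition hmin_feasible :: "nat \<Rightarrow> nat \<Rightarrow> complex mat \<Rightarrow> real set" where
  "hmin_feasible d n \<Omega> = {Re (mtrace Y) | Y. psd_mat n Y \<and> loewner_le (d*n) \<Omega> (kron (1\<^sub>m d) Y)}"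

lemma Hmin_eq_Inf_hmin_feasible: "Hmin d n \<Omega> = - log 2 (Inf (hmin_feasible d n \<Omega>))"
  by (simp add: Hmin_def hmin_feasible_def)

text \<open>A Hermitian \<open>\<Omega>\<close> is dominated by \<open>K \<cdot> 1\<close> for \<open>K\<close> the sum of the moduli of its entries.\<close>

lemma hmin_feasible_nonempty:
  assumes \<Omega>: "\<Omega> \<in> carrier_mat (d*n) (d*n)" and H: "hermitian_mat (d*n) \<Omega>"
  shows "hmin_feasible d n \<Omega> \<noteq> {}"
proof -
  define K where "K = (\<Sum>i<d*n. \<Sum>j<d*n. cmod (\<Omega> $$ (i,j)))"
  have K: "0 \<le> K"
    unfolding K_def by (simp add: sum_nonneg)
  let ?Y = "complex_of_real K \<cdot>\<^sub>m 1\<^sub>m n"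
  have "psd_mat n ?Y"
    using psd_mat_smult[OF psd_mat_one_mat K] .
  moreover have "loewner_le (d*n) \<Omega> (kron (1\<^sub>m d) ?Y)"
    unfolding loewner_le_def psd_mat_iff_sesq_form
  proof (intro conjI ballI)
    fix v :: "complex vec" assume v: "v \<in> carrier_vec (d*n)"
    have "kron (1\<^sub>m d) ?Y = complex_of_real K \<cdot>\<^sub>m 1\<^sub>m (d*n)"
      by (simp add: kron_smult_right[of "1\<^sub>m d" d d "1\<^sub>m n" n n] kron_one_one)
    then have "kron (1\<^sub>m d) ?Y - \<Omega> = complex_of_real K \<cdot>\<^sub>m 1\<^sub>m (d*n) + (-1) \<cdot>\<^sub>m \<Omega>"
      using \<Omega> by (auto intro!: eq_matI)
    then have "sesq_form (d*n) (kron (1\<^sub>m d) ?Y - \<Omega>) v v =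
        complex_of_real (K * (\<Sum>k<d*n. (cmod (v $ k))\<^sup>2)) - sesq_form (d*n) \<Omega> v v"
      using \<Omega> by (simp add: sesq_form_lincomb_mat sesq_form_one_mat)
    moreover have "Re (sesq_form (d*n) \<Omega> v v) \<le> K * (\<Sum>k<d*n. (cmod (v $ k))\<^sup>2)"
      unfolding K_def using norm_sesq_form_le complex_Re_le_cmod order_trans by blast
    ultimately show "0 \<le> sesq_form (d*n) (kron (1\<^sub>m d) ?Y - \<Omega>) v v"
      using sesq_form_hermitian_real[OF H] by (simp add: less_eq_complex_def)
  qed (use \<Omega> in auto)
  ultimately show ?thesis
    unfolding hmin_feasible_def by blast
qed

lemma hmin_feasible_lower_bound:
  assumes "s \<in> hmin_feasible d n \<Omega>" "0 < d"
  shows "Re (mtrace (partial_trace_fst d n \<Omega>)) / real d \<le> s"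
proof -
  obtain Y where "s = Re (mtrace Y)" "psd_mat n Y" "loewner_le (d*n) \<Omega> (kron (1\<^sub>m d) Y)"
    using assms(1) unfolding hmin_feasible_def by auto
  then show ?thesis
    using mtrace_partial_trace_fst_le[of d n \<Omega> Y] assms(2)
    by (simp add: psd_mat_carrier_mat divide_le_eq mult.commute)
qed

lemma loewner_le_kron_one_affine:
  fixes p c :: real
  assumes \<Omega>: "\<Omega> \<in> carrier_mat (d*n) (d*n)" and Y: "Y \<in> carrier_mat n n" and T: "T \<in> carrier_mat n n"
    and p: "0 < p"
  shows "loewner_le (d*n) (complex_of_real p \<cdot>\<^sub>m \<Omega> + complex_of_real c \<cdot>\<^sub>m kron (1\<^sub>m d) T)
           (kron (1\<^sub>m d) (complex_of_real p \<cdot>\<^sub>m Y + complex_of_real c \<cdot>\<^sub>m T))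
         \<longleftrightarrow> loewner_le (d*n) \<Omega> (kron (1\<^sub>m d) Y)"
proof -
  have "kron (1\<^sub>m d) (complex_of_real p \<cdot>\<^sub>m Y + complex_of_real c \<cdot>\<^sub>m T) -
      (complex_of_real p \<cdot>\<^sub>m \<Omega> + complex_of_real c \<cdot>\<^sub>m kron (1\<^sub>m d) T) =
      complex_of_real p \<cdot>\<^sub>m (kron (1\<^sub>m d) Y - \<Omega>)"
    using \<Omega> Y T by (intro eq_matI) (auto simp: kron_add_smult_right[of "1\<^sub>m d" d d Y n n T] algebra_simps)
  moreover have "kron (1\<^sub>m d) Y - \<Omega> \<in> carrier_mat (d*n) (d*n)"
    using \<Omega> Y by auto
  ultimately show ?thesis
    unfolding loewner_le_def using \<Omega> Y T p by (simp add: psd_mat_smult_iff)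
qed

text \<open>Shifting \<open>\<Omega>\<close> by \<open>c (1 \<otimes> T)\<close> and scaling by \<open>p\<close> transforms feasible \<open>Y\<close> into \<open>p Y + c T\<close>;
  the inverse map preserves positivity because \<open>T\<close> is the partial trace of \<open>\<Omega>\<close>.\<close>

lemma hmin_feasible_affine:
  fixes d n :: nat and \<Omega> :: "complex mat" and p c :: real
  defines "T \<equiv> partial_trace_fst d n \<Omega>"
  assumes \<Omega>: "\<Omega> \<in> carrier_mat (d*n) (d*n)" and T: "psd_mat n T"
    and d: "0 < d" and p: "0 < p" and c: "0 \<le> c"
  shows "hmin_feasible d n (complex_of_real p \<cdot>\<^sub>m \<Omega> + complex_of_real c \<cdot>\<^sub>m kron (1\<^sub>m d) T) =
         (\<lambda>s. p * s + c * Re (mtrace T)) ` hmin_feasible d n \<Omega>"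
    (is "hmin_feasible d n ?\<Omega>' = ?f ` _")
proof -
  have Tc: "T \<in> carrier_mat n n" by (simp add: T_def)
  have trace: "Re (mtrace (complex_of_real p \<cdot>\<^sub>m Y + complex_of_real c \<cdot>\<^sub>m T)) = ?f (Re (mtrace Y))"
    if "Y \<in> carrier_mat n n" for Y
    using that Tc by (simp add: mtrace_lincomb)
  show ?thesis
  proof (intro equalityI subsetI)
    fix s assume "s \<in> hmin_feasible d n ?\<Omega>'"
    then obtain Y where s: "s = Re (mtrace Y)" and Y: "psd_mat n Y"
      and L: "loewner_le (d*n) ?\<Omega>' (kron (1\<^sub>m d) Y)"
      unfolding hmin_feasible_def by auto
    have Yc: "Y \<in> carrier_mat n n" using Y by (rule psd_mat_carrier_mat)
    define Y' where "Y' = complex_of_real (1/p) \<cdot>\<^sub>m Y + complex_of_real (- c/p) \<cdot>\<^sub>m T"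
    have Y'c: "Y' \<in> carrier_mat n n" using Yc Tc by (simp add: Y'_def)
    have Y_eq: "Y = complex_of_real p \<cdot>\<^sub>m Y' + complex_of_real c \<cdot>\<^sub>m T"
      using Yc Tc p by (intro eq_matI) (auto simp: Y'_def field_simps)
    have L': "loewner_le (d*n) \<Omega> (kron (1\<^sub>m d) Y')"
      using L loewner_le_kron_one_affine[OF \<Omega> Y'c Tc p, where c=c] by (simp flip: Y_eq)
    have "psd_mat n Y'"
      using psd_mat_of_loewner_le_kron_one[OF L' Y'c d] T by (simp add: T_def)
    then show "s \<in> ?f ` hmin_feasible d n \<Omega>"
      using L' trace[OF Y'c] unfolding hmin_feasible_def s by (auto simp flip: Y_eq)
  next
    fix s assume "s \<in> ?f ` hmin_feasible d n \<Omega>"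
    then obtain Y where s: "s = ?f (Re (mtrace Y))" and Y: "psd_mat n Y"
      and L: "loewner_le (d*n) \<Omega> (kron (1\<^sub>m d) Y)"
      unfolding hmin_feasible_def by auto
    have Yc: "Y \<in> carrier_mat n n" using Y by (rule psd_mat_carrier_mat)
    have "psd_mat n (complex_of_real p \<cdot>\<^sub>m Y + complex_of_real c \<cdot>\<^sub>m T)"
      using psd_mat_lincomb[OF Y T] p c by simp
    moreover have "loewner_le (d*n) ?\<Omega>' (kron (1\<^sub>m d) (complex_of_real p \<cdot>\<^sub>m Y + complex_of_real c \<cdot>\<^sub>m T))"
      using L loewner_le_kron_one_affine[OF \<Omega> Yc Tc p, where c=c] by simp
    ultimately show "s \<in> hmin_feasible d n ?\<Omega>'"
      unfolding hmin_feasible_def s trace[OF Yc, symmetric] by blast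
  qed
qed

section \<open>Matrix-valued integrals\<close>

definition continuous_mat_fun :: "nat \<Rightarrow> nat \<Rightarrow> ('g::topological_space \<Rightarrow> complex mat) \<Rightarrow> bool" where
  "continuous_mat_fun m n F \<longleftrightarrow>
     (\<forall>g. F g \<in> carrier_mat m n) \<and> (\<forall>i<m. \<forall>j<n. continuous_on UNIV (\<lambda>g. F g $$ (i,j)))"

lemma continuous_mat_funD:
  assumes "continuous_mat_fun m n F"
  shows "F g \<in> carrier_mat m n" and "i < m \<Longrightarrow> j < n \<Longrightarrow> continuous_on UNIV (\<lambda>g. F g $$ (i,j))"
  using assms unfolding continuous_mat_fun_def by auto

lemma continuous_mat_fun_const: "A \<in> carrier_mat m n \<Longrightarrow> continuous_mat_fun m n (\<lambda>_. A)"
  by (simp add: continuous_mat_fun_def)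

lemma continuous_mat_fun_mult:
  assumes F: "continuous_mat_fun m k F" and G: "continuous_mat_fun k n G"
  shows "continuous_mat_fun m n (\<lambda>g. F g * G g)"
  unfolding continuous_mat_fun_def
proof (intro conjI allI impI)
  show "F g * G g \<in> carrier_mat m n" for g
    using continuous_mat_funD(1)[OF F] continuous_mat_funD(1)[OF G] by (rule mult_carrier_mat)
  fix i j assume ij: "i < m" "j < n"
  have "(F g * G g) $$ (i,j) = (\<Sum>t<k. F g $$ (i,t) * G g $$ (t,j))" for g
    using continuous_mat_funD(1)[OF F] continuous_mat_funD(1)[OF G] ij by (rule index_mult_mat_sum)
  then show "continuous_on UNIV (\<lambda>g. (F g * G g) $$ (i,j))"
    using continuous_mat_funD(2)[OF F] continuous_mat_funD(2)[OF G] ij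
    by (auto intro!: continuous_intros)
qed

lemma continuous_mat_fun_mat_adjoint:
  assumes F: "continuous_mat_fun m n F"
  shows "continuous_mat_fun n m (\<lambda>g. mat_adjoint (F g))"
  unfolding continuous_mat_fun_def
proof (intro conjI allI impI)
  show "mat_adjoint (F g) \<in> carrier_mat n m" for g
    using continuous_mat_funD(1)[OF F] by simp
  fix i j assume ij: "i < n" "j < m"
  have "mat_adjoint (F g) $$ (i,j) = cnj (F g $$ (j,i))" for g
    using carrier_matD[OF continuous_mat_funD(1)[OF F]] ij by simp
  then show "continuous_on UNIV (\<lambda>g. mat_adjoint (F g) $$ (i,j))"
    using continuous_mat_funD(2)[OF F] ij by (auto intro!: continuous_intros)
qed

lemma continuous_mat_fun_conj_mat:
  assumes F: "continuous_mat_fun m n F"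
  shows "continuous_mat_fun m n (\<lambda>g. conj_mat (F g))"
  unfolding continuous_mat_fun_def
proof (intro conjI allI impI)
  show "conj_mat (F g) \<in> carrier_mat m n" for g
    using continuous_mat_funD(1)[OF F] by simp
  fix i j assume ij: "i < m" "j < n"
  have "conj_mat (F g) $$ (i,j) = cnj (F g $$ (i,j))" for g
    using carrier_matD[OF continuous_mat_funD(1)[OF F]] ij by simp
  then show "continuous_on UNIV (\<lambda>g. conj_mat (F g) $$ (i,j))"
    using continuous_mat_funD(2)[OF F] ij by (auto intro!: continuous_intros)
qed

lemma continuous_mat_fun_kron:
  assumes F: "continuous_mat_fun a b F" and G: "continuous_mat_fun m n G"
  shows "continuous_mat_fun (a*m) (b*n) (\<lambda>g. kron (F g) (G g))"
  unfolding continuous_mat_fun_def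
proof (intro conjI allI impI)
  show "kron (F g) (G g) \<in> carrier_mat (a*m) (b*n)" for g
    using continuous_mat_funD(1)[OF F] continuous_mat_funD(1)[OF G] by simp
  fix i j assume ij: "i < a*m" "j < b*n"
  have "kron (F g) (G g) $$ (i,j) = F g $$ (i div m, j div n) * G g $$ (i mod m, j mod n)" for g
    using continuous_mat_funD(1)[OF F] continuous_mat_funD(1)[OF G] ij by (rule index_kron)
  then show "continuous_on UNIV (\<lambda>g. kron (F g) (G g) $$ (i,j))"
    using continuous_mat_funD(2)[OF F] continuous_mat_funD(2)[OF G]
      div_mod_less_of_less_mult_nat[OF ij(1)] div_mod_less_of_less_mult_nat[OF ij(2)]
    by (auto intro!: continuous_intros)
qed

lemma continuous_mat_fun_sandwich:
  assumes V: "continuous_mat_fun m n V" and A: "A \<in> carrier_mat n n"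
  shows "continuous_mat_fun m m (\<lambda>g. sandwich (V g) A)"
  unfolding sandwich_def
  by (rule continuous_mat_fun_mult[OF continuous_mat_fun_mult[OF V continuous_mat_fun_const[OF A]]
        continuous_mat_fun_mat_adjoint[OF V]])

lemma cont_unitary_rep_continuous_mat_fun:
  "cont_unitary_rep d U \<Longrightarrow> continuous_mat_fun d d U"
  by (simp add: cont_unitary_rep_def continuous_mat_fun_def unitary_mat_carrier_mat)

definition mat_integral :: "'g measure \<Rightarrow> nat \<Rightarrow> ('g \<Rightarrow> complex mat) \<Rightarrow> complex mat" where
  "mat_integral \<mu> n F = mat n n (\<lambda>(i,j). \<integral>g. F g $$ (i,j) \<partial>\<mu>)"

lemma mat_integral_carrier_mat [simp]: "mat_integral \<mu> n F \<in> carrier_mat n n"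
  by (simp add: mat_integral_def)

lemma dim_mat_integral [simp]:
  "dim_row (mat_integral \<mu> n F) = n" "dim_col (mat_integral \<mu> n F) = n"
  by (simp_all add: mat_integral_def)

lemma twirl_eq_mat_integral:
  "twirl \<mu> UR UX dR dX M = mat_integral \<mu> (dR*dX) (\<lambda>g. sandwich (kron (UR g) (UX g)) M)"
  by (simp add: twirl_def mat_integral_def sandwich_def)

lemma twirl_carrier_mat [simp]: "twirl \<mu> UR UX dR dX M \<in> carrier_mat (dR*dX) (dR*dX)"
  by (simp add: twirl_def)

lemma hermitian_mat_mat_integral:
  assumes "\<And>g. hermitian_mat n (F g)"
  shows "hermitian_mat n (mat_integral \<mu> n F)"
  unfolding hermitian_mat_def
proof (intro allI impI)
  fix i j assume ij: "i < n" "j < n"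
  have "(\<integral>g. cnj (F g $$ (j,i)) \<partial>\<mu>) = (\<integral>g. F g $$ (i,j) \<partial>\<mu>)"
    by (rule Bochner_Integration.integral_cong) (simp_all add: hermitian_mat_cnj_index[OF assms ij(2,1)])
  then show "mat_integral \<mu> n F $$ (i,j) = cnj (mat_integral \<mu> n F $$ (j,i))"
    using ij by (simp add: mat_integral_def)
qed

lemma mat_integral_smult:
  assumes "\<And>g. F g \<in> carrier_mat n n"
  shows "mat_integral \<mu> n (\<lambda>g. c \<cdot>\<^sub>m F g) = c \<cdot>\<^sub>m mat_integral \<mu> n F"
  using carrier_matD[OF assms] by (intro eq_matI) (auto simp: mat_integral_def)

lemma mat_integral_kron_one:
  assumes F: "\<And>g. F g \<in> carrier_mat n n"
  shows "mat_integral \<mu> (d*n) (\<lambda>g. kron (1\<^sub>m d) (F g)) = kron (1\<^sub>m d) (mat_integral \<mu> n F)"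
proof (rule eq_matI)
  fix i j assume "i < dim_row (kron (1\<^sub>m d) (mat_integral \<mu> n F))"
    "j < dim_col (kron (1\<^sub>m d) (mat_integral \<mu> n F))"
  then have ij: "i < d*n" "j < d*n" by auto
  have "kron (1\<^sub>m d) (F g) $$ (i,j) = (if i div n = j div n then F g $$ (i mod n, j mod n) else 0)" for g
    using F ij by (rule index_kron_one_left)
  then have "mat_integral \<mu> (d*n) (\<lambda>g. kron (1\<^sub>m d) (F g)) $$ (i,j) =
      (if i div n = j div n then mat_integral \<mu> n F $$ (i mod n, j mod n) else 0)"
    using ij div_mod_less_of_less_mult_nat[of _ d n]
    by (cases "i div n = j div n") (simp_all add: mat_integral_def)
  then show "mat_integral \<mu> (d*n) (\<lambda>g. kron (1\<^sub>m d) (F g)) $$ (i,j) =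
      kron (1\<^sub>m d) (mat_integral \<mu> n F) $$ (i,j)"
    using index_kron_one_left[OF mat_integral_carrier_mat[of \<mu> n F] ij] by simp
qed auto

text \<open>Continuity suffices for integrability since \<open>'g\<close> is compact.\<close>

locale compact_prob_space = prob_space \<mu> for \<mu> :: "'g::topological_space measure" +
  assumes sets_eq_borel: "sets \<mu> = sets borel"
    and compact_UNIV: "compact (UNIV :: 'g set)"
begin

lemma integrable_continuous:
  fixes f :: "'g \<Rightarrow> 'b::{banach, second_countable_topology}"
  assumes f: "continuous_on UNIV f"
  shows "integrable \<mu> f"
proof -
  have "f \<in> borel_measurable \<mu>"
    using borel_measurable_continuous_onI[OF f] measurable_cong_sets[OF sets_eq_borel refl] by blast
  moreover obtain B where "\<And>x. norm (f x) \<le> B"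
    using compact_imp_bounded[OF compact_continuous_image[OF f compact_UNIV]]
    by (auto simp: bounded_iff)
  ultimately show ?thesis
    by (intro integrable_const_bound[where B=B]) auto
qed

lemma integrable_mat_entry:
  "continuous_mat_fun m n F \<Longrightarrow> i < m \<Longrightarrow> j < n \<Longrightarrow> integrable \<mu> (\<lambda>g. F g $$ (i,j))"
  by (intro integrable_continuous continuous_mat_funD(2))

lemma mat_integral_lincomb:
  assumes F: "continuous_mat_fun n n F" and G: "continuous_mat_fun n n G"
  shows "mat_integral \<mu> n (\<lambda>g. x \<cdot>\<^sub>m F g + y \<cdot>\<^sub>m G g) =
         x \<cdot>\<^sub>m mat_integral \<mu> n F + y \<cdot>\<^sub>m mat_integral \<mu> n G"
proof (rule eq_matI)
  fix i j assume "i < dim_row (x \<cdot>\<^sub>m mat_integral \<mu> n F + y \<cdot>\<^sub>m mat_integral \<mu> n G)"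
    "j < dim_col (x \<cdot>\<^sub>m mat_integral \<mu> n F + y \<cdot>\<^sub>m mat_integral \<mu> n G)"
  then have ij: "i < n" "j < n" by auto
  have "(x \<cdot>\<^sub>m F g + y \<cdot>\<^sub>m G g) $$ (i,j) = x * F g $$ (i,j) + y * G g $$ (i,j)" for g
    using carrier_matD[OF continuous_mat_funD(1)[OF F]] carrier_matD[OF continuous_mat_funD(1)[OF G]] ij
    by simp
  then show "mat_integral \<mu> n (\<lambda>g. x \<cdot>\<^sub>m F g + y \<cdot>\<^sub>m G g) $$ (i,j) =
      (x \<cdot>\<^sub>m mat_integral \<mu> n F + y \<cdot>\<^sub>m mat_integral \<mu> n G) $$ (i,j)"
    using ij integrable_mat_entry[OF F ij] integrable_mat_entry[OF G ij]
    by (simp add: mat_integral_def)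
qed auto

lemma integral_double_sum_mat_entries:
  assumes F: "continuous_mat_fun n n F"
  shows "(\<integral>g. (\<Sum>i<n. \<Sum>j<n. a i j * F g $$ (i,j)) \<partial>\<mu>) = (\<Sum>i<n. \<Sum>j<n. a i j * (\<integral>g. F g $$ (i,j) \<partial>\<mu>))"
proof -
  have int: "integrable \<mu> (\<lambda>g. a i j * F g $$ (i,j))" if "i \<in> {..<n}" "j \<in> {..<n}" for i j
    using integrable_mat_entry[OF F] that by simp
  then have "(\<integral>g. (\<Sum>i<n. \<Sum>j<n. a i j * F g $$ (i,j)) \<partial>\<mu>) = (\<Sum>i<n. \<integral>g. (\<Sum>j<n. a i j * F g $$ (i,j)) \<partial>\<mu>)"
    by (intro Bochner_Integration.integral_sum Bochner_Integration.integrable_sum) auto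
  also have "\<dots> = (\<Sum>i<n. \<Sum>j<n. \<integral>g. a i j * F g $$ (i,j) \<partial>\<mu>)"
    using int by (intro sum.cong refl Bochner_Integration.integral_sum) auto
  finally show ?thesis
    by simp
qed

lemma mtrace_mat_integral:
  assumes F: "continuous_mat_fun n n F"
  shows "mtrace (mat_integral \<mu> n F) = (\<integral>g. mtrace (F g) \<partial>\<mu>)"
proof -
  have "mtrace (mat_integral \<mu> n F) = (\<Sum>i<n. \<integral>g. F g $$ (i,i) \<partial>\<mu>)"
    unfolding mtrace_carrier_mat[OF mat_integral_carrier_mat[of \<mu> n F]] by (simp add: mat_integral_def)
  also have "\<dots> = (\<integral>g. (\<Sum>i<n. F g $$ (i,i)) \<partial>\<mu>)"
    by (rule Bochner_Integration.integral_sum[symmetric]) (auto intro: integrable_mat_entry[OF F])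
  also have "\<dots> = (\<integral>g. mtrace (F g) \<partial>\<mu>)"
    using mtrace_carrier_mat[OF continuous_mat_funD(1)[OF F]] by simp
  finally show ?thesis .
qed

lemma psd_mat_mat_integral:
  assumes F: "continuous_mat_fun n n F" and psd: "\<And>g. psd_mat n (F g)"
  shows "psd_mat n (mat_integral \<mu> n F)"
  unfolding psd_mat_iff_sesq_form
proof (intro conjI ballI)
  fix v :: "complex vec" assume v: "v \<in> carrier_vec n"
  have sesq: "sesq_form n M v v = (\<Sum>i<n. \<Sum>j<n. (cnj (v $ i) * v $ j) * M $$ (i,j))" for M
    unfolding sesq_form_def by (simp add: ac_simps)
  have eq: "sesq_form n (mat_integral \<mu> n F) v v = (\<integral>g. sesq_form n (F g) v v \<partial>\<mu>)"
    unfolding sesq integral_double_sum_mat_entries[OF F] by (simp add: mat_integral_def)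
  have "integrable \<mu> (\<lambda>g. sesq_form n (F g) v v)"
    unfolding sesq by (intro Bochner_Integration.integrable_sum integrable_mult_right) (auto intro: integrable_mat_entry[OF F])
  then have "Re (\<integral>g. sesq_form n (F g) v v \<partial>\<mu>) = (\<integral>g. Re (sesq_form n (F g) v v) \<partial>\<mu>)"
    and "Im (\<integral>g. sesq_form n (F g) v v \<partial>\<mu>) = (\<integral>g. Im (sesq_form n (F g) v v) \<partial>\<mu>)"
    by simp_all
  moreover have "0 \<le> Re (sesq_form n (F g) v v)" "Im (sesq_form n (F g) v v) = 0" for g
    using psd[of g] v by (auto simp: psd_mat_iff_sesq_form less_eq_complex_def)
  ultimately show "0 \<le> sesq_form n (mat_integral \<mu> n F) v v"
    unfolding eq less_eq_complex_def by (simp add: integral_nonneg)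
qed simp

lemma partial_trace_fst_mat_integral:
  assumes F: "continuous_mat_fun (d*n) (d*n) F"
  shows "partial_trace_fst d n (mat_integral \<mu> (d*n) F) =
         mat_integral \<mu> n (\<lambda>g. partial_trace_fst d n (F g))"
proof (rule eq_matI)
  fix k l assume "k < dim_row (mat_integral \<mu> n (\<lambda>g. partial_trace_fst d n (F g)))"
    "l < dim_col (mat_integral \<mu> n (\<lambda>g. partial_trace_fst d n (F g)))"
  then have kl: "k < n" "l < n" by auto
  have idx: "r*n+k < d*n" "r*n+l < d*n" if "r < d" for r
    using that kl by (simp_all add: mult_add_less_mult_nat)
  have "partial_trace_fst d n (mat_integral \<mu> (d*n) F) $$ (k,l) = (\<Sum>r<d. \<integral>g. F g $$ (r*n+k, r*n+l) \<partial>\<mu>)"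
    using kl idx by (simp add: partial_trace_fst_def mat_integral_def)
  also have "\<dots> = (\<integral>g. (\<Sum>r<d. F g $$ (r*n+k, r*n+l)) \<partial>\<mu>)"
    using idx by (intro Bochner_Integration.integral_sum[symmetric] integrable_mat_entry[OF F]) auto
  also have "\<dots> = mat_integral \<mu> n (\<lambda>g. partial_trace_fst d n (F g)) $$ (k,l)"
    using kl by (simp add: partial_trace_fst_def mat_integral_def)
  finally show "partial_trace_fst d n (mat_integral \<mu> (d*n) F) $$ (k,l) =
      mat_integral \<mu> n (\<lambda>g. partial_trace_fst d n (F g)) $$ (k,l)" .
qed auto

end

section \<open>Twirling\<close>

definition local_twirl :: "'g measure \<Rightarrow> ('g \<Rightarrow> complex mat) \<Rightarrow> nat \<Rightarrow> complex mat \<Rightarrow> complex mat" where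
  "local_twirl \<mu> U n T = mat_integral \<mu> n (\<lambda>g. sandwich (U g) T)"

lemma state_dim_pos:
  assumes "is_state n \<rho>"
  shows "0 < n"
proof (rule ccontr)
  assume "\<not> 0 < n"
  moreover have "\<rho> \<in> carrier_mat n n"
    using assms by (simp add: is_state_def psd_mat_carrier_mat)
  ultimately show False
    using assms by (simp add: is_state_def mtrace_def)
qed

locale unitary_twirl = compact_prob_space \<mu> for \<mu> :: "'g::topological_space measure" +
  fixes UR UX :: "'g \<Rightarrow> complex mat" and dR dX :: nat
  assumes UR_unitary: "\<And>g. unitary_mat dR (UR g)" and UX_unitary: "\<And>g. unitary_mat dX (UX g)"
    and UR_continuous: "continuous_mat_fun dR dR UR" and UX_continuous: "continuous_mat_fun dX dX UX"
begin

abbreviation twirl_RX :: "complex mat \<Rightarrow> complex mat" where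
  "twirl_RX M \<equiv> twirl \<mu> UR UX dR dX M"

abbreviation twirl_X :: "complex mat \<Rightarrow> complex mat" where
  "twirl_X T \<equiv> local_twirl \<mu> UX dX T"

lemma UR_carrier_mat: "UR g \<in> carrier_mat dR dR"
  using UR_unitary by (rule unitary_mat_carrier_mat)

lemma UX_carrier_mat: "UX g \<in> carrier_mat dX dX"
  using UX_unitary by (rule unitary_mat_carrier_mat)

lemma sandwich_UX_carrier_mat [simp]:
  "T \<in> carrier_mat dX dX \<Longrightarrow> sandwich (UX g) T \<in> carrier_mat dX dX"
  using UX_carrier_mat by (rule sandwich_carrier_mat)

lemma continuous_mat_fun_sandwich_kron:
  "M \<in> carrier_mat (dR*dX) (dR*dX) \<Longrightarrow>
     continuous_mat_fun (dR*dX) (dR*dX) (\<lambda>g. sandwich (kron (UR g) (UX g)) M)"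
  by (rule continuous_mat_fun_sandwich[OF continuous_mat_fun_kron[OF UR_continuous UX_continuous]])

lemma twirl_lincomb:
  assumes "M \<in> carrier_mat (dR*dX) (dR*dX)" "N \<in> carrier_mat (dR*dX) (dR*dX)"
  shows "twirl_RX (x \<cdot>\<^sub>m M + y \<cdot>\<^sub>m N) = x \<cdot>\<^sub>m twirl_RX M + y \<cdot>\<^sub>m twirl_RX N"
proof -
  have "sandwich (kron (UR g) (UX g)) (x \<cdot>\<^sub>m M + y \<cdot>\<^sub>m N) =
      x \<cdot>\<^sub>m sandwich (kron (UR g) (UX g)) M + y \<cdot>\<^sub>m sandwich (kron (UR g) (UX g)) N" for g
    by (rule sandwich_add_smult[of "kron (UR g) (UX g)" "dR*dX" "dR*dX"])
       (use assms UR_carrier_mat UX_carrier_mat in auto)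
  then show ?thesis
    using assms
    by (simp add: twirl_eq_mat_integral mat_integral_lincomb continuous_mat_fun_sandwich_kron)
qed

lemma twirl_kron_one:
  assumes T: "T \<in> carrier_mat dX dX"
  shows "twirl_RX (kron (1\<^sub>m dR) T) = kron (1\<^sub>m dR) (twirl_X T)"
proof -
  have "sandwich (kron (UR g) (UX g)) (kron (1\<^sub>m dR) T) = kron (1\<^sub>m dR) (sandwich (UX g) T)" for g
    by (simp add: sandwich_kron[OF UR_carrier_mat UX_carrier_mat one_carrier_mat T] sandwich_one[OF UR_unitary])
  then show ?thesis
    using T UX_carrier_mat by (simp add: twirl_eq_mat_integral local_twirl_def mat_integral_kron_one)
qed

lemma partial_trace_twirl_kron:
  assumes \<eta>: "\<eta> \<in> carrier_mat dR dR" and T: "T \<in> carrier_mat dX dX"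
  shows "partial_trace_fst dR dX (twirl_RX (kron \<eta> T)) = mtrace \<eta> \<cdot>\<^sub>m twirl_X T"
proof -
  have "partial_trace_fst dR dX (sandwich (kron (UR g) (UX g)) (kron \<eta> T)) = mtrace \<eta> \<cdot>\<^sub>m sandwich (UX g) T"
    for g
    using sandwich_kron[OF UR_carrier_mat UX_carrier_mat \<eta> T]
      partial_trace_fst_kron[OF sandwich_carrier_mat[OF UR_carrier_mat \<eta>] sandwich_carrier_mat[OF UX_carrier_mat T]]
    by (simp add: mtrace_sandwich[OF UR_unitary \<eta>])
  then show ?thesis
    using \<eta> T UX_carrier_mat
    by (simp add: twirl_eq_mat_integral partial_trace_fst_mat_integral continuous_mat_fun_sandwich_kron
        local_twirl_def mat_integral_smult)
qed

lemma hermitian_twirl_kron: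
  assumes "\<eta> \<in> carrier_mat dR dR" "T \<in> carrier_mat dX dX" "hermitian_mat dR \<eta>" "hermitian_mat dX T"
  shows "hermitian_mat (dR*dX) (twirl_RX (kron \<eta> T))"
  unfolding twirl_eq_mat_integral
  using assms UR_carrier_mat UX_carrier_mat
  by (intro hermitian_mat_mat_integral hermitian_mat_sandwich hermitian_mat_kron) auto

lemma psd_local_twirl:
  assumes "psd_mat dX T"
  shows "psd_mat dX (twirl_X T)"
  unfolding local_twirl_def
  using assms UX_carrier_mat psd_mat_carrier_mat[OF assms]
  by (intro psd_mat_mat_integral continuous_mat_fun_sandwich[OF UX_continuous] psd_mat_sandwich)

lemma mtrace_local_twirl:
  assumes "T \<in> carrier_mat dX dX"
  shows "mtrace (twirl_X T) = mtrace T"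
  by (simp add: local_twirl_def mtrace_mat_integral[OF continuous_mat_fun_sandwich[OF UX_continuous assms]]
      mtrace_sandwich[OF UX_unitary assms] prob_space)

lemma twirl_depol:
  assumes \<eta>: "\<eta> \<in> carrier_mat dR dR" and T: "T \<in> carrier_mat dX dX"
  shows "twirl_RX (kron (depol dR p \<eta>) T) =
    complex_of_real p \<cdot>\<^sub>m twirl_RX (kron \<eta> T) +
    complex_of_real ((1 - p) / real dR) \<cdot>\<^sub>m kron (1\<^sub>m dR) (twirl_X T)"
  using assms
  by (simp add: depol_def kron_add_smult_left[OF \<eta> one_carrier_mat T] twirl_lincomb twirl_kron_one)

lemma Hmin_twirl_depol:
  assumes \<eta>: "is_state dR \<eta>" and T: "is_state dX T" and p: "0 < p" "p \<le> 1"
  obtains a where "1 / real dR \<le> a"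
    and "Hmin dR dX (twirl_RX (kron \<eta> T)) = - log 2 a"
    and "Hmin dR dX (twirl_RX (kron (depol dR p \<eta>) T)) = - log 2 (p * a + (1 - p) / real dR)"
proof -
  have d: "0 < dR" using \<eta> by (rule state_dim_pos)
  have \<eta>c: "\<eta> \<in> carrier_mat dR dR" and Tc: "T \<in> carrier_mat dX dX"
    using \<eta> T by (auto simp: is_state_def psd_mat_carrier_mat)
  let ?\<Omega> = "twirl_RX (kron \<eta> T)"
  let ?S = "hmin_feasible dR dX ?\<Omega>"
  have ptrace: "partial_trace_fst dR dX ?\<Omega> = twirl_X T"
    using \<eta> \<eta>c Tc by (simp add: partial_trace_twirl_kron is_state_def)
  have Tbar: "psd_mat dX (twirl_X T)" "mtrace (twirl_X T) = 1"
    using T Tc by (simp_all add: is_state_def psd_local_twirl mtrace_local_twirl)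
  have ne: "?S \<noteq> {}"
    using \<eta> T \<eta>c Tc
    by (intro hmin_feasible_nonempty hermitian_twirl_kron)
       (auto simp: is_state_def psd_mat_hermitian)
  have lower: "1 / real dR \<le> s" if "s \<in> ?S" for s
    using hmin_feasible_lower_bound[OF that d] ptrace Tbar by simp
  have "hmin_feasible dR dX (twirl_RX (kron (depol dR p \<eta>) T)) =
      (\<lambda>s. p * s + (1 - p) / real dR * Re (mtrace (partial_trace_fst dR dX ?\<Omega>))) ` ?S"
    unfolding twirl_depol[OF \<eta>c Tc] ptrace[symmetric]
    by (rule hmin_feasible_affine) (use d p Tbar ptrace in auto)
  then have depol: "hmin_feasible dR dX (twirl_RX (kron (depol dR p \<eta>) T)) =
      (\<lambda>s. p * s + (1 - p) / real dR) ` ?S"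
    using ptrace Tbar by simp
  have "bdd_below ?S"
    using lower by (rule bdd_belowI)
  then have "Inf (hmin_feasible dR dX (twirl_RX (kron (depol dR p \<eta>) T))) = p * Inf ?S + (1 - p) / real dR"
    unfolding depol using ne p(1) by (intro cInf_image_affine)
  moreover have "1 / real dR \<le> Inf ?S"
    using ne lower by (rule cInf_greatest)
  ultimately show thesis
    using that[of "Inf ?S"] by (simp add: Hmin_eq_Inf_hmin_feasible)
qed

end

lemma unitary_twirl_haar:
  assumes "compact (UNIV :: 'g::topological_group_add set)" "haar_prob (\<mu> :: 'g measure)"
    and "cont_unitary_rep dR U" "cont_unitary_rep dX V"
  shows "unitary_twirl \<mu> (\<lambda>g. conj_mat (U g)) V dR dX"
proof -
  have "compact_prob_space \<mu>"
    using assms(1,2) unfolding haar_prob_def compact_prob_space_def compact_prob_space_axioms_def by auto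
  moreover have "unitary_twirl_axioms (\<lambda>g. conj_mat (U g)) V dR dX"
  proof
    show "unitary_mat dR (conj_mat (U g))" "unitary_mat dX (V g)" for g
      using assms(3,4) unitary_mat_conj_mat by (auto simp: cont_unitary_rep_def)
    show "continuous_mat_fun dR dR (\<lambda>g. conj_mat (U g))" "continuous_mat_fun dX dX V"
      using assms(3,4) by (simp_all add: continuous_mat_fun_conj_mat cont_unitary_rep_continuous_mat_fun)
  qed
  ultimately show ?thesis
    by (rule unitary_twirl.intro)
qed

theorem lemma11:
  fixes \<mu> :: "'g::{topological_group_add, t2_space} measure"
    and UA UB :: "'g \<Rightarrow> complex mat"
    and dA dB :: nat
    and \<rho> \<sigma> \<eta> :: "complex mat"
    and p :: real
  assumes "compact (UNIV :: 'g set)"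
    and "haar_prob \<mu>"
    and "cont_unitary_rep dA UA"
    and "cont_unitary_rep dB UB"
    and "is_state dA \<rho>"
    and "is_state dB \<sigma>"
    and "is_state dB \<eta>"
    and "0 < p" and "p \<le> 1"
  shows "Delta_H \<mu> UA dA UB dB \<rho> \<sigma> \<eta> \<ge> 0 \<longleftrightarrow>
         Delta_H \<mu> UA dA UB dB \<rho> \<sigma> (depol dB p \<eta>) \<ge> 0"
proof -
  interpret \<sigma>: unitary_twirl \<mu> "\<lambda>g. conj_mat (UB g)" UB dB dB
    using assms(1,2,4,4) by (rule unitary_twirl_haar)
  interpret \<rho>: unitary_twirl \<mu> "\<lambda>g. conj_mat (UB g)" UA dB dA
    using assms(1,2,4,3) by (rule unitary_twirl_haar)
  obtain a\<sigma> where a\<sigma>: "1 / real dB \<le> a\<sigma>" "H_eta \<mu> UB dB UB dB \<eta> \<sigma> = - log 2 a\<sigma>"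
      "H_eta \<mu> UB dB UB dB (depol dB p \<eta>) \<sigma> = - log 2 (p * a\<sigma> + (1 - p) / real dB)"
    using \<sigma>.Hmin_twirl_depol[OF assms(7,6,8,9)] unfolding H_eta_def by blast
  obtain a\<rho> where a\<rho>: "1 / real dB \<le> a\<rho>" "H_eta \<mu> UB dB UA dA \<eta> \<rho> = - log 2 a\<rho>"
      "H_eta \<mu> UB dB UA dA (depol dB p \<eta>) \<rho> = - log 2 (p * a\<rho> + (1 - p) / real dB)"
    using \<rho>.Hmin_twirl_depol[OF assms(7,5,8,9)] unfolding H_eta_def by blast
  have "0 < 1 / real dB"
    using state_dim_pos[OF assms(7)] by simp
  then have a_pos: "0 < a\<sigma>" "0 < a\<rho>"
    using a\<sigma>(1) a\<rho>(1) by linarith+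
  moreover have "0 \<le> (1 - p) / real dB"
    using assms(9) by simp
  ultimately have "0 < p * a\<sigma> + (1 - p) / real dB" "0 < p * a\<rho> + (1 - p) / real dB"
    using assms(8) by (simp_all add: add_pos_nonneg)
  with a_pos show ?thesis
    using assms(8) unfolding Delta_H_def a\<sigma>(2,3) a\<rho>(2,3) by simp
qed

end
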